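(* No tree is H--cordial.
   Context: Graphs are finite and simple. A labeling of a graph $G$ is a map $f:E(G)\to\{-1,+1\}$. Given a labeling $f$, for each vertex $v$ define $f(v)=\sum_{e\in I(v)} f(e)$, where $I(v)$ is the set of edges incident to $v$. For an integer $c$, $e_f(c)$ denotes the number of edges with label $c$, and $v_f(c)$ the number of vertices $v$ with $f(v)=c$. A labeling $f$ is H--cordial if there is a positive constant $K$ such that $|f(v)|=K$ for every vertex $v$, $|e_f(1)-e_f(-1)|\le 1$, and $|v_f(K)-v_f(-K)|\le 1$. A graph is H--cordial if it admits an H--cordial labeling. *)

theory Defs
  imports Main
begin

definition simple_graph :: "'a set \<Rightarrow> 'a set set \<Rightarrow> bool" where
  "simple_graph V E \<longleftrightarrow> finite V \<and> (\<forall>e\<in>E. e \<subseteq> V \<and> card e = 2)"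

definition adj :: "'a set set \<Rightarrow> 'a \<Rightarrow> 'a \<Rightarrow> bool" where
  "adj E u v \<longleftrightarrow> {u, v} \<in> E"

definition connected_graph :: "'a set \<Rightarrow> 'a set set \<Rightarrow> bool" where
  "connected_graph V E \<longleftrightarrow> V \<noteq> {} \<and> (\<forall>u\<in>V. \<forall>v\<in>V. (adj E)\<^sup>*\<^sup>* u v)"

definition is_cycle :: "'a set set \<Rightarrow> 'a list \<Rightarrow> bool" where
  "is_cycle E cs \<longleftrightarrow> length cs \<ge> 3 \<and> distinct cs
     \<and> (\<forall>i. Suc i < length cs \<longrightarrow> adj E (cs ! i) (cs ! Suc i))
     \<and> adj E (last cs) (hd cs)"

definition acyclic_graph :: "'a set set \<Rightarrow> bool" where
  "acyclic_graph E \<longleftrightarrow> \<not> (\<exists>cs. is_cycle E cs)"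

definition is_tree :: "'a set \<Rightarrow> 'a set set \<Rightarrow> bool" where
  "is_tree V E \<longleftrightarrow> simple_graph V E \<and> connected_graph V E \<and> acyclic_graph E"

definition labeling :: "'a set set \<Rightarrow> ('a set \<Rightarrow> int) \<Rightarrow> bool" where
  "labeling E f \<longleftrightarrow> (\<forall>e\<in>E. f e \<in> {-1, 1})"

definition vlabel :: "'a set set \<Rightarrow> ('a set \<Rightarrow> int) \<Rightarrow> 'a \<Rightarrow> int" where
  "vlabel E f v = (\<Sum>e\<in>{e\<in>E. v \<in> e}. f e)"

definition e_count :: "'a set set \<Rightarrow> ('a set \<Rightarrow> int) \<Rightarrow> int \<Rightarrow> nat" where
  "e_count E f c = card {e\<in>E. f e = c}"

definition v_count :: "'a set \<Rightarrow> 'a set set \<Rightarrow> ('a set \<Rightarrow> int) \<Rightarrow> int \<Rightarrow> nat" where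
  "v_count V E f c = card {v\<in>V. vlabel E f v = c}"

definition H_cordial_labeling :: "'a set \<Rightarrow> 'a set set \<Rightarrow> ('a set \<Rightarrow> int) \<Rightarrow> bool" where
  "H_cordial_labeling V E f \<longleftrightarrow> labeling E f \<and>
     (\<exists>K::int. K > 0 \<and> (\<forall>v\<in>V. \<bar>vlabel E f v\<bar> = K)
        \<and> \<bar>int (e_count E f 1) - int (e_count E f (-1))\<bar> \<le> 1
        \<and> \<bar>int (v_count V E f K) - int (v_count V E f (-K))\<bar> \<le> 1)"

definition H_cordial :: "'a set \<Rightarrow> 'a set set \<Rightarrow> bool" where
  "H_cordial V E \<longleftrightarrow> (\<exists>f. H_cordial_labeling V E f)"

end

theory Submission
  imports Defs
begin

(* A tree has exactly one more vertex than edges (remove a leaf, which exists as an endpoint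
   of a longest path).  Summing the vertex labels counts every edge label twice, so
   K (v_K - v_-K) = 2 (e_1 - e_-1).  But v_K + v_-K = e_1 + e_-1 + 1 forces the two
   differences, both in {-1, 0, 1}, to have opposite parity: one is 0 and the other is
   odd, which contradicts the identity since K > 0. *)

lemma simple_graph_finite_edges:
  assumes "simple_graph V E"
  shows "finite E"
proof -
  have "E \<subseteq> Pow V" using assms by (auto simp: simple_graph_def)
  then show ?thesis using assms by (auto simp: simple_graph_def intro: finite_subset)
qed

lemma simple_graph_edgeE:
  assumes "simple_graph V E" "e \<in> E" "v \<in> e"
  obtains w where "e = {v, w}" "w \<noteq> v" "w \<in> V"
proof -
  have "card e = 2" "e \<subseteq> V" using assms by (auto simp: simple_graph_def)
  then show ?thesis using that \<open>v \<in> e\<close> by (auto simp: card_Suc_eq numeral_2_eq_2)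
qed

definition is_path :: "'a set \<Rightarrow> 'a set set \<Rightarrow> 'a list \<Rightarrow> bool" where
  "is_path V E cs \<longleftrightarrow> length cs \<ge> 2 \<and> distinct cs \<and> set cs \<subseteq> V
     \<and> (\<forall>i. Suc i < length cs \<longrightarrow> adj E (cs ! i) (cs ! Suc i))"

lemma length_path_le_card:
  assumes "finite V" "is_path V E cs"
  shows "length cs \<le> card V"
  using assms by (metis card_mono distinct_card is_path_def)

lemma is_path_Cons:
  assumes "is_path V E cs" "w \<in> V" "w \<notin> set cs" "{w, hd cs} \<in> E"
  shows "is_path V E (w # cs)"
  using assms unfolding is_path_def
  by (auto simp: adj_def hd_conv_nth nth_Cons split: nat.split)

lemma is_cycle_take_path:
  assumes "is_path V E cs" "2 \<le> i" "i < length cs" "{cs ! i, hd cs} \<in> E"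
  shows "is_cycle E (take (Suc i) cs)"
proof -
  have "last (take (Suc i) cs) = cs ! i"
    using assms(3) by (simp add: take_Suc_conv_app_nth)
  moreover have "hd (take (Suc i) cs) = hd cs"
    by simp
  ultimately show ?thesis
    using assms unfolding is_path_def is_cycle_def by (auto simp: adj_def insert_commute)
qed

lemma longest_path_exists:
  assumes "simple_graph V E" "E \<noteq> {}"
  obtains cs where "is_path V E cs" "\<And>ds. is_path V E ds \<Longrightarrow> length ds \<le> length cs"
proof -
  let ?has_length = "\<lambda>n. \<exists>ds. is_path V E ds \<and> length ds = n"
  obtain e where "e \<in> E" using assms(2) by blast
  then obtain x y where "e = {x, y}" "y \<noteq> x" "x \<in> V" "y \<in> V"
    using assms(1) by (auto simp: simple_graph_def card_2_iff)
  then have "is_path V E [x, y]"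
    using \<open>e \<in> E\<close> by (auto simp: is_path_def adj_def less_Suc_eq)
  then have two: "?has_length 2" by fastforce
  have bounded: "\<forall>n. ?has_length n \<longrightarrow> n \<le> card V"
    using assms(1) length_path_le_card unfolding simple_graph_def by blast
  obtain m where "?has_length m" and longest: "\<forall>n. ?has_length n \<longrightarrow> n \<le> m"
    using Nat.ex_has_greatest_nat[OF two bounded] by blast
  then obtain cs where "is_path V E cs" "length cs = m" by blast
  then show ?thesis using that longest by blast
qed

(* An endpoint of a longest path is a leaf: any further neighbour would either extend the
   path or close a cycle with it. *)
lemma acyclic_graph_leafE:
  assumes "simple_graph V E" "acyclic_graph E" "E \<noteq> {}"
  obtains p v where "{p, v} \<in> E" "\<And>e. e \<in> E \<Longrightarrow> v \<in> e \<Longrightarrow> e = {p, v}"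
proof -
  obtain cs where path: "is_path V E cs"
    and longest: "\<And>ds. is_path V E ds \<Longrightarrow> length ds \<le> length cs"
    using longest_path_exists assms(1,3) by blast
  define v where "v = hd cs"
  define p where "p = cs ! 1"
  have len: "2 \<le> length cs" using path by (simp add: is_path_def)
  then have hd_cs: "hd cs = cs ! 0" by (cases cs) simp_all
  have "adj E (cs ! 0) (cs ! 1)" using path len by (simp add: is_path_def)
  then have "{p, v} \<in> E"
    by (simp add: adj_def p_def v_def hd_cs insert_commute)
  moreover have "e = {p, v}" if e: "e \<in> E" "v \<in> e" for e
  proof -
    obtain w where w: "e = {v, w}" "w \<noteq> v" "w \<in> V"
      using simple_graph_edgeE[OF assms(1) e] by metis
    have "w \<in> set cs"
    proof (rule ccontr)
      assume "w \<notin> set cs"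
      then have "is_path V E (w # cs)"
        using is_path_Cons[OF path] w e by (simp add: v_def insert_commute)
      then show False using longest[of "w # cs"] by simp
    qed
    then obtain i where i: "i < length cs" "cs ! i = w" by (auto simp: in_set_conv_nth)
    have "i \<noteq> 0" using i w by (metis v_def hd_cs)
    moreover have "\<not> 2 \<le> i"
    proof
      assume "2 \<le> i"
      then have "is_cycle E (take (Suc i) cs)"
        using is_cycle_take_path[OF path _ i(1)] i w e by (simp add: v_def insert_commute)
      then show False using assms(2) by (auto simp: acyclic_graph_def)
    qed
    ultimately have "i = 1" by simp
    then show ?thesis using i w by (simp add: p_def insert_commute)
  qed
  ultimately show ?thesis by (rule that)
qed

lemma simple_graph_remove_leaf:
  assumes "simple_graph V E" and leaf: "\<And>e. e \<in> E \<Longrightarrow> v \<in> e \<Longrightarrow> e = {p, v}"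
  shows "simple_graph (V - {v}) (E - {{p, v}})"
  unfolding simple_graph_def
proof (intro conjI ballI)
  show "finite (V - {v})" using assms(1) by (simp add: simple_graph_def)
  fix e assume "e \<in> E - {{p, v}}"
  then have "e \<in> E" "e \<noteq> {p, v}" by simp_all
  then have "v \<notin> e" using leaf by metis
  then show "e \<subseteq> V - {v}" "card e = 2"
    using \<open>e \<in> E\<close> assms(1) by (auto simp: simple_graph_def)
qed

lemma acyclic_graph_subset:
  assumes "acyclic_graph E" "E' \<subseteq> E"
  shows "acyclic_graph E'"
proof -
  have "is_cycle E cs" if "is_cycle E' cs" for cs
    using that assms(2) unfolding is_cycle_def adj_def by blast
  then show ?thesis using assms(1) unfolding acyclic_graph_def by blast
qed

lemma connected_graph_remove_leaf:
  assumes "connected_graph V E" "p \<in> V" "p \<noteq> v"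
    and leaf: "\<And>e. e \<in> E \<Longrightarrow> v \<in> e \<Longrightarrow> e = {p, v}"
  shows "connected_graph (V - {v}) (E - {{p, v}})"
proof -
  let ?E' = "E - {{p, v}}"
  \<comment> \<open>Collapsing v onto p turns walks along E into walks that avoid the leaf edge.\<close>
  define retract where "retract z = (if z = v then p else z)" for z
  have retract_step: "(adj ?E')\<^sup>=\<^sup>= (retract y) (retract z)" if "adj E y z" for y z
  proof (cases "{y, z} = {p, v}")
    case True
    then have "retract y = retract z"
      using assms(3) unfolding retract_def by (metis doubleton_eq_iff)
    then show ?thesis by simp
  next
    case False
    have "{y, z} \<in> E" using that by (simp add: adj_def)
    then have "y \<noteq> v" "z \<noteq> v" using False leaf[OF \<open>{y, z} \<in> E\<close>] by (metis insert_iff)+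
    then show ?thesis using False \<open>{y, z} \<in> E\<close> by (simp add: retract_def adj_def)
  qed
  have lift: "(adj ?E')\<^sup>*\<^sup>* (retract a) (retract b)" if "(adj E)\<^sup>*\<^sup>* a b" for a b
    using that
  proof (induction rule: rtranclp_induct)
    case (step y z)
    from retract_step[OF step.hyps(2)]
    have "retract y = retract z \<or> adj ?E' (retract y) (retract z)" by auto
    with step.IH show ?case by (metis rtranclp.rtrancl_into_rtrancl)
  qed simp
  show ?thesis
    unfolding connected_graph_def
  proof (intro conjI ballI)
    show "V - {v} \<noteq> {}" using assms(2,3) by blast
    fix a b assume "a \<in> V - {v}" "b \<in> V - {v}"
    then show "(adj ?E')\<^sup>*\<^sup>* a b"
      using lift[of a b] assms(1) by (simp add: connected_graph_def retract_def)
  qed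
qed

lemma is_tree_remove_leaf:
  assumes "is_tree V E" "{p, v} \<in> E" and leaf: "\<And>e. e \<in> E \<Longrightarrow> v \<in> e \<Longrightarrow> e = {p, v}"
  shows "is_tree (V - {v}) (E - {{p, v}})"
proof -
  from assms(1) have sg: "simple_graph V E" and con: "connected_graph V E"
    and ac: "acyclic_graph E"
    by (simp_all add: is_tree_def)
  then have "p \<in> V" "p \<noteq> v" using assms(2) by (auto simp: simple_graph_def)
  then show ?thesis
    unfolding is_tree_def
    using simple_graph_remove_leaf[OF sg leaf] connected_graph_remove_leaf[OF con _ _ leaf]
      acyclic_graph_subset[OF ac Diff_subset]
    by blast
qed

lemma tree_card_vertices:
  assumes "is_tree V E"
  shows "card V = card E + 1"
  using assms
proof (induction "card V" arbitrary: V E rule: less_induct)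
  case less
  then have sg: "simple_graph V E" and con: "connected_graph V E" and ac: "acyclic_graph E"
    by (auto simp: is_tree_def)
  have fin: "finite V" using sg by (simp add: simple_graph_def)
  show ?case
  proof (cases "E = {}")
    case True
    obtain u where u: "u \<in> V" using con by (auto simp: connected_graph_def)
    have "w = u" if "w \<in> V" for w
    proof -
      have "(adj {})\<^sup>*\<^sup>* u w" using con True u that by (simp add: connected_graph_def)
      then show "w = u" by (induction rule: rtranclp_induct) (auto simp: adj_def)
    qed
    then have "V = {u}" using u by blast
    then show ?thesis using True by simp
  next
    case False
    then obtain p v where pv: "{p, v} \<in> E" and leaf: "\<And>e. e \<in> E \<Longrightarrow> v \<in> e \<Longrightarrow> e = {p, v}"
      using acyclic_graph_leafE[OF sg ac] by metis
    have "v \<in> V" using sg pv by (auto simp: simple_graph_def)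
    then have "card (V - {v}) < card V" using fin by (rule card_Diff1_less[rotated])
    then have "card (V - {v}) = card (E - {{p, v}}) + 1"
      using less.hyps is_tree_remove_leaf[OF less.prems pv leaf] by blast
    moreover have "card V \<noteq> 0" "card E \<noteq> 0"
      using \<open>v \<in> V\<close> pv fin simple_graph_finite_edges[OF sg] by auto
    ultimately show ?thesis
      using \<open>v \<in> V\<close> pv by (simp add: card_Diff_singleton)
  qed
qed

lemma sum_two_valued:
  fixes g :: "'b \<Rightarrow> int"
  assumes "finite S" "\<forall>x\<in>S. g x = c \<or> g x = - c"
  shows "(\<Sum>x\<in>S. g x) = c * (int (card {x\<in>S. g x = c}) - int (card {x\<in>S. g x = - c}))"
proof (cases "c = 0")
  case True
  then show ?thesis using assms(2) by simp
next
  case False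
  let ?P = "{x\<in>S. g x = c}" and ?N = "{x\<in>S. g x = - c}"
  have "S = ?P \<union> ?N" "?P \<inter> ?N = {}" using assms(2) False by auto
  then have "(\<Sum>x\<in>S. g x) = (\<Sum>x\<in>?P. g x) + (\<Sum>x\<in>?N. g x)"
    using assms(1) by (metis finite_Un sum.union_disjoint)
  also have "(\<Sum>x\<in>?P. g x) = (\<Sum>x\<in>?P. c)" by (rule sum.cong) simp_all
  also have "(\<Sum>x\<in>?N. g x) = (\<Sum>x\<in>?N. - c)" by (rule sum.cong) simp_all
  finally show ?thesis by (simp add: algebra_simps)
qed

lemma card_two_valued:
  fixes g :: "'b \<Rightarrow> int"
  assumes "finite S" "\<forall>x\<in>S. g x = c \<or> g x = - c" "c \<noteq> 0"
  shows "card S = card {x\<in>S. g x = c} + card {x\<in>S. g x = - c}"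
proof -
  have "S = {x\<in>S. g x = c} \<union> {x\<in>S. g x = - c}"
    "{x\<in>S. g x = c} \<inter> {x\<in>S. g x = - c} = {}"
    using assms(2,3) by auto
  then show ?thesis using assms(1) by (metis card_Un_disjoint finite_Un)
qed

lemma sum_vlabel_eq_twice_sum_labels:
  assumes "simple_graph V E"
  shows "(\<Sum>v\<in>V. vlabel E f v) = 2 * (\<Sum>e\<in>E. f e)"
proof -
  have fin: "finite V" using assms by (simp add: simple_graph_def)
  have "(\<Sum>v\<in>V. vlabel E f v) = (\<Sum>e\<in>E. \<Sum>v\<in>{v\<in>V. v \<in> e}. f e)"
    unfolding vlabel_def by (rule sum.swap_restrict[OF fin simple_graph_finite_edges[OF assms]])
  also have "\<dots> = (\<Sum>e\<in>E. 2 * f e)"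
  proof (rule sum.cong)
    fix e assume "e \<in> E"
    then have "{v\<in>V. v \<in> e} = e" "card e = 2" using assms by (auto simp: simple_graph_def)
    then show "(\<Sum>v\<in>{v\<in>V. v \<in> e}. f e) = 2 * f e" by simp
  qed simp
  finally show ?thesis by (simp add: sum_distrib_left)
qed

(* a - b and c - d have opposite parity, so one of them is 0 and the other is \<plusminus>1. *)
lemma unbalanced_signed_counts:
  fixes a b c d K :: int
  assumes "a + b = c + d + 1" "K * (a - b) = 2 * (c - d)"
    and "\<bar>a - b\<bar> \<le> 1" "\<bar>c - d\<bar> \<le> 1" "K > 0"
  shows False
proof -
  consider "a - b = 0" | "a - b = 1" | "a - b = -1" using assms(3) by linarith
  then show False
  proof cases
    case 1
    then show False using assms(1,2) by presburger
  next
    case 2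
    then have "K = 2 * (c - d)" using assms(2) by simp
    then show False using assms(1,4,5) 2 by presburger
  next
    case 3
    then have "K = - 2 * (c - d)" using assms(2) by simp
    then show False using assms(1,4,5) 3 by presburger
  qed
qed

lemma constant_magnitude_labeling_counts:
  assumes "simple_graph V E" "labeling E f" "K > 0" "\<forall>v\<in>V. \<bar>vlabel E f v\<bar> = K"
  shows "card V = v_count V E f K + v_count V E f (-K)"
    and "card E = e_count E f 1 + e_count E f (-1)"
    and "K * (int (v_count V E f K) - int (v_count V E f (-K)))
           = 2 * (int (e_count E f 1) - int (e_count E f (-1)))"
proof -
  have fin: "finite V" "finite E"
    using assms(1) simple_graph_finite_edges by (auto simp: simple_graph_def)
  have vlabel_pm: "\<forall>v\<in>V. vlabel E f v = K \<or> vlabel E f v = - K" using assms(4) by auto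
  have f_pm: "\<forall>e\<in>E. f e = 1 \<or> f e = - 1" using assms(2) by (auto simp: labeling_def)
  show "card V = v_count V E f K + v_count V E f (-K)"
    using card_two_valued[OF fin(1) vlabel_pm] assms(3) by (simp add: v_count_def)
  show "card E = e_count E f 1 + e_count E f (-1)"
    using card_two_valued[OF fin(2) f_pm] by (simp add: e_count_def)
  show "K * (int (v_count V E f K) - int (v_count V E f (-K)))
      = 2 * (int (e_count E f 1) - int (e_count E f (-1)))"
    using sum_vlabel_eq_twice_sum_labels[OF assms(1), of f] sum_two_valued[OF fin(1) vlabel_pm]
      sum_two_valued[OF fin(2) f_pm]
    by (simp add: v_count_def e_count_def)
qed

theorem corollary1:
  fixes V :: "'a set" and E :: "'a set set"
  assumes "is_tree V E"
  shows "\<not> H_cordial V E"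
proof
  assume "H_cordial V E"
  then obtain f K where "labeling E f" "K > 0" "\<forall>v\<in>V. \<bar>vlabel E f v\<bar> = K"
    and edges_balanced: "\<bar>int (e_count E f 1) - int (e_count E f (-1))\<bar> \<le> 1"
    and vertices_balanced: "\<bar>int (v_count V E f K) - int (v_count V E f (-K))\<bar> \<le> 1"
    by (auto simp: H_cordial_def H_cordial_labeling_def)
  moreover have "simple_graph V E" using assms by (simp add: is_tree_def)
  ultimately have counts: "card V = v_count V E f K + v_count V E f (-K)"
      "card E = e_count E f 1 + e_count E f (-1)"
      "K * (int (v_count V E f K) - int (v_count V E f (-K)))
         = 2 * (int (e_count E f 1) - int (e_count E f (-1)))"
    using constant_magnitude_labeling_counts by blast+
  then show False
    using tree_card_vertices[OF assms] \<open>K > 0\<close>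
      unbalanced_signed_counts[OF _ _ vertices_balanced edges_balanced]
    by simp
qed

end
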